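(* Let $Q$ be a conjunctive query over $\mathcal{D}^p$ and $D^p$ an instance of $\mathcal{D}^p$ consistent w.r.t. a set $\mathcal{IC}$ of denial constraints. For each pair $\langle\vec t,[p^{\min},p^{\max}]\rangle\in Ans(Q,D^p,\mathcal{IC})$ and each $p\in[p^{\min},p^{\max}]$, there is a model $M$ of $D^p$ w.r.t. $\mathcal{IC}$ such that $\langle\vec t,p\rangle\in Ans^M(Q,D^p,\mathcal{IC})$.
   Context: A PDB instance $D^p$ of a schema $\mathcal{D}^p$ is a finite set of tuples, each with a probability $p(t)\in[0,1]$. Possible worlds are subsets of its tuples ($pwd(D^p)$); an interpretation is a probability distribution on $pwd(D^p)$ such that the total probability of worlds containing $t$ is $p(t)$. For a set $\mathcal{IC}$ of denial constraints (formulas $\forall\vec x.\neg[R_1(\vec x_1)\wedge\dots\wedge R_m(\vec x_m)\wedge\phi]$, $\phi$ a conjunction of comparisons), a model is an interpretation assigning probability $0$ to every world violating $\mathcal{IC}$; $\mathcal{M}(D^p,\mathcal{IC})$ is the set of models. A conjunctive query is $Q(\vec x)=\exists\vec z.\,R_1(\vec y_1)\wedge\dots\wedge R_m(\vec y_m)\wedge\phi(\vec y_1,\dots,\vec y_m)$ with $\phi$ a conjunction of comparisons. For a model $M$, $Ans^M(Q,D^p,\mathcal{IC})$ is the set of pairs $\langle\vec t,p^M_Q(\vec t)\rangle$ for ground tuples $\vec t$ such that $w\models Q(\vec t)$ for some $w\in pwd(D^p)$, where $p^M_Q(\vec t)=\sum_{w\in pwd(D^p),\,w\models Q(\vec t)}M(w)$.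 $Ans(Q,D^p,\mathcal{IC})$ is the set of pairs $\langle\vec t,[p^{\min},p^{\max}]\rangle$ for $\vec t$ occurring in $Ans^M$ for some model $M$, with $p^{\min}=\min_{M\in\mathcal{M}(D^p,\mathcal{IC})}p^M_Q(\vec t)$ and $p^{\max}=\max_{M\in\mathcal{M}(D^p,\mathcal{IC})}p^M_Q(\vec t)$. *)

theory Defs
  imports Complex_Main
begin

type_synonym ('r, 'c) fact = "'r \<times> 'c list"

datatype ('v, 'c) trm = Var 'v | Const 'c

datatype cmp_op = CEq | CNeq | CLt | CLe | CGt | CGe

type_synonym ('v, 'c) comparison = "('v, 'c) trm \<times> cmp_op \<times> ('v, 'c) trm"

type_synonym ('r, 'v, 'c) atom = "'r \<times> ('v, 'c) trm list"

fun trm_val :: "('v \<Rightarrow> 'c) \<Rightarrow> ('v, 'c) trm \<Rightarrow> 'c" where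
  "trm_val \<nu> (Var v) = \<nu> v"
| "trm_val \<nu> (Const c) = c"

fun op_holds :: "cmp_op \<Rightarrow> 'c::linorder \<Rightarrow> 'c \<Rightarrow> bool" where
  "op_holds CEq a b = (a = b)"
| "op_holds CNeq a b = (a \<noteq> b)"
| "op_holds CLt a b = (a < b)"
| "op_holds CLe a b = (a \<le> b)"
| "op_holds CGt a b = (a > b)"
| "op_holds CGe a b = (a \<ge> b)"

definition cmp_holds :: "('v \<Rightarrow> 'c::linorder) \<Rightarrow> ('v, 'c) comparison \<Rightarrow> bool" where
  "cmp_holds \<nu> cm = (case cm of (s, r, u) \<Rightarrow> op_holds r (trm_val \<nu> s) (trm_val \<nu> u))"

definition ground_atom :: "('v \<Rightarrow> 'c) \<Rightarrow> ('r, 'v, 'c) atom \<Rightarrow> ('r, 'c) fact" where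
  "ground_atom \<nu> a = (fst a, map (trm_val \<nu>) (snd a))"

text \<open>Denial constraint  forall x. not [R1(x1) and ... and Rm(xm) and phi]:
  list of relational atoms and list of comparisons (phi is their conjunction).\<close>
record ('r, 'v, 'c) denial =
  dc_atoms :: "('r, 'v, 'c) atom list"
  dc_cmps  :: "('v, 'c) comparison list"

definition sat_denial :: "('r, 'c::linorder) fact set \<Rightarrow> ('r, 'v, 'c) denial \<Rightarrow> bool" where
  "sat_denial w ic = (\<not> (\<exists>\<nu>. (\<forall>a \<in> set (dc_atoms ic). ground_atom \<nu> a \<in> w)
                            \<and> (\<forall>cm \<in> set (dc_cmps ic). cmp_holds \<nu> cm)))"

definition sat_ICs :: "('r, 'c::linorder) fact set \<Rightarrow> ('r, 'v, 'c) denial set \<Rightarrow> bool" where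
  "sat_ICs w IC = (\<forall>ic \<in> IC. sat_denial w ic)"

text \<open>Conjunctive query Q(x) = exists z. R1(y1) and ... and Rm(ym) and phi:
  free (answer) variables x, relational atoms, comparisons; all other variables are
  existentially quantified.\<close>
record ('r, 'v, 'c) cq =
  cq_head  :: "'v list"
  cq_atoms :: "('r, 'v, 'c) atom list"
  cq_cmps  :: "('v, 'c) comparison list"

definition cq_holds :: "('r, 'c::linorder) fact set \<Rightarrow> ('r, 'v, 'c) cq \<Rightarrow> 'c list \<Rightarrow> bool" where
  "cq_holds w Q t = (\<exists>\<nu>. map \<nu> (cq_head Q) = t
                        \<and> (\<forall>a \<in> set (cq_atoms Q). ground_atom \<nu> a \<in> w)
                        \<and> (\<forall>cm \<in> set (cq_cmps Q). cmp_holds \<nu> cm))"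

text \<open>A schema assigns to each relation name its arity.\<close>
type_synonym 'r schema = "'r \<Rightarrow> nat"

definition atoms_over :: "'r schema \<Rightarrow> ('r, 'v, 'c) atom list \<Rightarrow> bool" where
  "atoms_over S as = (\<forall>a \<in> set as. length (snd a) = S (fst a))"

definition cq_over :: "'r schema \<Rightarrow> ('r, 'v, 'c) cq \<Rightarrow> bool" where
  "cq_over S Q = atoms_over S (cq_atoms Q)"

definition denial_over :: "'r schema \<Rightarrow> ('r, 'v, 'c) denial \<Rightarrow> bool" where
  "denial_over S ic = atoms_over S (dc_atoms ic)"

definition pdb_instance :: "'r schema \<Rightarrow> ('r, 'c) fact set \<Rightarrow> (('r, 'c) fact \<Rightarrow> real) \<Rightarrow> bool" where
  "pdb_instance S D p = (finite D \<and> (\<forall>t \<in> D. length (snd t) = S (fst t))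
                         \<and> (\<forall>t \<in> D. 0 \<le> p t \<and> p t \<le> 1))"

definition pwd :: "('r, 'c) fact set \<Rightarrow> ('r, 'c) fact set set" where
  "pwd D = Pow D"

text \<open>Interpretation: probability distribution on pwd(D) (represented as a function that
  vanishes outside pwd(D)) whose marginal at each tuple t is p(t).\<close>
definition pdb_interpretation :: "('r, 'c) fact set \<Rightarrow> (('r, 'c) fact \<Rightarrow> real)
                              \<Rightarrow> (('r, 'c) fact set \<Rightarrow> real) \<Rightarrow> bool" where
  "pdb_interpretation D p M =
     ((\<forall>w \<in> pwd D. 0 \<le> M w) \<and> (\<forall>w. w \<notin> pwd D \<longrightarrow> M w = 0)
      \<and> (\<Sum>w \<in> pwd D. M w) = 1
      \<and> (\<forall>t \<in> D. (\<Sum>w \<in> {w \<in> pwd D. t \<in> w}. M w) = p t))"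

definition is_model :: "('r, 'c::linorder) fact set \<Rightarrow> (('r, 'c) fact \<Rightarrow> real)
                        \<Rightarrow> ('r, 'v, 'c) denial set \<Rightarrow> (('r, 'c) fact set \<Rightarrow> real) \<Rightarrow> bool" where
  "is_model D p IC M = (pdb_interpretation D p M \<and> (\<forall>w \<in> pwd D. \<not> sat_ICs w IC \<longrightarrow> M w = 0))"

definition models :: "('r, 'c::linorder) fact set \<Rightarrow> (('r, 'c) fact \<Rightarrow> real)
                      \<Rightarrow> ('r, 'v, 'c) denial set \<Rightarrow> (('r, 'c) fact set \<Rightarrow> real) set" where
  "models D p IC = {M. is_model D p IC M}"

definition consistent :: "('r, 'c::linorder) fact set \<Rightarrow> (('r, 'c) fact \<Rightarrow> real)
                          \<Rightarrow> ('r, 'v, 'c) denial set \<Rightarrow> bool" where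
  "consistent D p IC = (models D p IC \<noteq> {})"

definition pQ :: "(('r, 'c) fact set \<Rightarrow> real) \<Rightarrow> ('r, 'v, 'c::linorder) cq
                  \<Rightarrow> ('r, 'c) fact set \<Rightarrow> 'c list \<Rightarrow> real" where
  "pQ M Q D t = (\<Sum>w \<in> {w \<in> pwd D. cq_holds w Q t}. M w)"

definition AnsM :: "(('r, 'c) fact set \<Rightarrow> real) \<Rightarrow> ('r, 'v, 'c::linorder) cq
                    \<Rightarrow> ('r, 'c) fact set \<Rightarrow> ('c list \<times> real) set" where
  "AnsM M Q D = {(t, pQ M Q D t) | t. \<exists>w \<in> pwd D. cq_holds w Q t}"

definition Ans :: "('r, 'v, 'c::linorder) cq \<Rightarrow> ('r, 'c) fact set \<Rightarrow> (('r, 'c) fact \<Rightarrow> real)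
                   \<Rightarrow> ('r, 'v, 'c) denial set \<Rightarrow> ('c list \<times> real \<times> real) set" where
  "Ans Q D p IC =
     {(t, Inf {pQ M Q D t | M. M \<in> models D p IC}, Sup {pQ M Q D t | M. M \<in> models D p IC}) | t.
        \<exists>M \<in> models D p IC. \<exists>q. (t, q) \<in> AnsM M Q D}"

end

theory Submission
  imports Defs "HOL-Analysis.Analysis"
begin

text \<open>The models of a finite instance form a compact set in the product topology on
  functions from worlds to reals, and M \<mapsto> pQ M Q D t is continuous, so the bounds
  p_min and p_max are attained by models M1 and M2. The models are closed under
  convex combinations, along which pQ is affine; hence every q between p_min and
  p_max is attained by a mixture of M1 and M2.\<close>

definition mix :: "real \<Rightarrow> ('a \<Rightarrow> real) \<Rightarrow> ('a \<Rightarrow> real) \<Rightarrow> 'a \<Rightarrow> real" where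
  "mix u M1 M2 = (\<lambda>w. (1 - u) * M1 w + u * M2 w)"

lemma sum_mix: "(\<Sum>w\<in>A. mix u M1 M2 w) = (1 - u) * sum M1 A + u * sum M2 A"
  by (simp add: mix_def sum.distrib sum_distrib_left)

lemma mix_nonneg:
  assumes "0 \<le> u" "u \<le> 1" "0 \<le> M1 w" "0 \<le> M2 w"
  shows "0 \<le> mix u M1 M2 w"
  using assms by (simp add: mix_def)

lemma is_model_mix:
  assumes "is_model D p IC M1" "is_model D p IC M2" "0 \<le> u" "u \<le> 1"
  shows "is_model D p IC (mix u M1 M2)"
proof -
  have "(1 - u) * x + u * x = x" for x :: real
    by (simp add: algebra_simps)
  then show ?thesis
    using assms unfolding is_model_def pdb_interpretation_def sum_mix
    by (auto intro!: mix_nonneg) (simp_all add: mix_def)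
qed

lemma pQ_mix: "pQ (mix u M1 M2) Q D t = (1 - u) * pQ M1 Q D t + u * pQ M2 Q D t"
  unfolding pQ_def by (rule sum_mix)

lemma continuous_on_sum_apply: "continuous_on S (\<lambda>M :: 'a \<Rightarrow> real. \<Sum>w\<in>A. M w)"
  by (intro continuous_on_sum continuous_on_subset[OF continuous_on_product_coordinates]) simp

lemma closed_models: "closed (models D p IC)"
proof -
  have "models D p IC =
     (\<Inter>w\<in>pwd D. {M. 0 \<le> M w}) \<inter> (\<Inter>w\<in>- pwd D. {M. M w = 0}) \<inter> {M. (\<Sum>w\<in>pwd D. M w) = 1}
     \<inter> (\<Inter>t\<in>D. {M. (\<Sum>w\<in>{w\<in>pwd D. t \<in> w}. M w) = p t})
     \<inter> (\<Inter>w\<in>{w\<in>pwd D. \<not> sat_ICs w IC}. {M. M w = 0})"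
    (is "_ = ?K")
    by (auto simp: models_def is_model_def pdb_interpretation_def)
  moreover have "closed ?K"
    by (intro closed_Int closed_INT ballI closed_Collect_eq closed_Collect_le
        continuous_on_sum_apply continuous_on_const continuous_on_product_coordinates)
  ultimately show ?thesis by simp
qed

lemma pdb_interpretation_le_one:
  assumes "pdb_interpretation D p M" "finite D" "w \<in> pwd D"
  shows "M w \<le> 1"
proof -
  have "M w \<le> (\<Sum>w\<in>pwd D. M w)"
    using assms by (intro member_le_sum) (auto simp: pdb_interpretation_def pwd_def)
  then show ?thesis
    using assms(1) by (simp add: pdb_interpretation_def)
qed

lemma compact_models:
  assumes "finite D"
  shows "compact (models D p IC)"
proof -
  define K where "K = PiE UNIV (\<lambda>w. if w \<in> pwd D then {0..1::real} else {0})"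
  have "compactin (product_topology (\<lambda>_. euclidean) UNIV) K"
    unfolding K_def compactin_PiE by (auto simp: compactin_euclidean_iff)
  then have "compact K"
    by (simp add: euclidean_product_topology compactin_euclidean_iff)
  moreover have "models D p IC \<subseteq> K"
  proof
    fix M assume "M \<in> models D p IC"
    then have M: "pdb_interpretation D p M"
      by (simp add: models_def is_model_def)
    then show "M \<in> K"
      using pdb_interpretation_le_one[OF M assms] unfolding pdb_interpretation_def
      by (auto simp: K_def)
  qed
  ultimately show ?thesis
    using compact_Int_closed[OF _ closed_models, of K D p IC] by (simp add: Int_absorb1)
qed

lemma continuous_attains_Inf_image:
  fixes f :: "'a::topological_space \<Rightarrow> real"
  assumes "compact S" "S \<noteq> {}" "continuous_on S f"
  shows "\<exists>x\<in>S. f x = Inf (f ` S)"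
proof -
  have "compact (f ` S)"
    using assms by (rule_tac compact_continuous_image)
  then have "Inf (f ` S) \<in> f ` S"
    using assms(2) by (intro closed_contains_Inf compact_imp_closed bounded_imp_bdd_below
        compact_imp_bounded) auto
  then show ?thesis by auto
qed

lemma continuous_attains_Sup_image:
  fixes f :: "'a::topological_space \<Rightarrow> real"
  assumes "compact S" "S \<noteq> {}" "continuous_on S f"
  shows "\<exists>x\<in>S. f x = Sup (f ` S)"
proof -
  have "compact (f ` S)"
    using assms by (rule_tac compact_continuous_image)
  then have "Sup (f ` S) \<in> f ` S"
    using assms(2) by (intro closed_contains_Sup compact_imp_closed bounded_imp_bdd_above
        compact_imp_bounded) auto
  then show ?thesis by auto
qed

theorem proposition2:
  fixes S :: "'r schema"
    and Q :: "('r, 'v, 'c::linorder) cq"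
    and D :: "('r, 'c) fact set"
    and p :: "('r, 'c) fact \<Rightarrow> real"
    and IC :: "('r, 'v, 'c) denial set"
  assumes "cq_over S Q"
    and "\<forall>ic \<in> IC. denial_over S ic"
    and "pdb_instance S D p"
    and "consistent D p IC"
    and "(t, pmin, pmax) \<in> Ans Q D p IC"
    and "pmin \<le> q" and "q \<le> pmax"
  shows "\<exists>M \<in> models D p IC. (t, q) \<in> AnsM M Q D"
proof -
  define f where "f M = pQ M Q D t" for M
  have image: "{pQ M Q D t | M. M \<in> models D p IC} = f ` models D p IC"
    by (auto simp: f_def)
  from assms(5) have bounds: "pmin = Inf (f ` models D p IC)" "pmax = Sup (f ` models D p IC)"
    and answer: "\<And>M. (t, f M) \<in> AnsM M Q D"
    by (auto simp: Ans_def image AnsM_def f_def)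
  have "compact (models D p IC)" "models D p IC \<noteq> {}" "continuous_on (models D p IC) f"
    using assms(3,4) compact_models
    by (auto simp: pdb_instance_def consistent_def f_def pQ_def continuous_on_sum_apply)
  then obtain M1 M2 where M1: "M1 \<in> models D p IC" "f M1 = pmin"
    and M2: "M2 \<in> models D p IC" "f M2 = pmax"
    unfolding bounds by (metis continuous_attains_Inf_image continuous_attains_Sup_image)
  have "q \<in> closed_segment pmin pmax"
    using assms(6,7) by (simp add: closed_segment_eq_real_ivl)
  then obtain u where u: "0 \<le> u" "u \<le> 1" "q = (1 - u) * pmin + u * pmax"
    by (auto simp: in_segment)
  have "mix u M1 M2 \<in> models D p IC" "f (mix u M1 M2) = q"
    using M1 M2 u is_model_mix by (auto simp: models_def f_def pQ_mix)
  then show ?thesis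
    using answer by metis
qed

end
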